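(* Let $(\mathcal{X},\mu)$ be a probability space without atoms. Let $\Psi:(0,1]\to\mathbb{R}_+$ satisfy the following: - $\Psi(1)>0$ and $\Psi$ is decreasing; - $\psi(s):=s\Psi(s)$ is increasing and $\psi(0_+)=0$; - $\int_0\frac{ds}{s\Psi(s)}<\infty$; - $t\mapsto\Psi(e^{-t})$ is convex near $\infty$. Then there exists a function $\alpha$ on $[1,\infty)$ such that $t\mapsto t\alpha(t)>0$ is increasing on $[1,\infty)$, $$\int_1^\infty\frac{dt}{t\alpha(t)}<\infty,$$ and $$\alpha\Big(\frac{\|f\|_*}{\|f\|_1}\Big)\|f\|_*\le\|f\|_{\Lambda_\psi}$$ for all measurable $f$ for which the left-hand side is defined.
   Context: Norms: for a measurable $f$ let $N_f(t)=\mu\{x:|f(x)|>t\}$ and $\|f\|_1=\int|f|\,d\mu$. The Lorentz norm is $$\|f\|_{\Lambda_\psi}=\int_0^\infty\psi(N_f(t))\,dt,$$ equivalently $\int_0^1f^*(s)\,d\psi(s)$, where $f^*$ is the decreasing rearrangement of $|f|$. The norm $\|f\|_*$ is $\|f\|_{\Lambda_{\psi_0}}$ with $\psi_0(s)=s\ln(e/s)$. Note that $\|f\|_*\ge\|f\|_1$. *)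

theory Defs
  imports "HOL-Probability.Probability"
begin

definition atomless :: "'a measure \<Rightarrow> bool" where
  "atomless M \<longleftrightarrow> (\<forall>A\<in>sets M. 0 < emeasure M A \<longrightarrow>
      (\<exists>B\<in>sets M. B \<subseteq> A \<and> 0 < emeasure M B \<and> emeasure M B < emeasure M A))"

definition distr_fun :: "'a measure \<Rightarrow> ('a \<Rightarrow> real) \<Rightarrow> real \<Rightarrow> real" where
  "distr_fun M f t = measure M {x \<in> space M. \<bar>f x\<bar> > t}"

definition lorentz_norm :: "'a measure \<Rightarrow> (real \<Rightarrow> real) \<Rightarrow> ('a \<Rightarrow> real) \<Rightarrow> ennreal" where
  "lorentz_norm M \<psi> f = (\<integral>\<^sup>+ t. indicator {0..} t * ennreal (\<psi> (distr_fun M f t)) \<partial>lborel)"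

definition L1_norm :: "'a measure \<Rightarrow> ('a \<Rightarrow> real) \<Rightarrow> ennreal" where
  "L1_norm M f = (\<integral>\<^sup>+ x. ennreal \<bar>f x\<bar> \<partial>M)"

definition psi0 :: "real \<Rightarrow> real" where
  "psi0 s = (if s = 0 then 0 else s * ln (exp 1 / s))"

definition star_norm :: "'a measure \<Rightarrow> ('a \<Rightarrow> real) \<Rightarrow> ennreal" where
  "star_norm M f = lorentz_norm M psi0 f"

end

theory Submission
  imports Defs
begin

text \<open>Write \<open>psi0 s = s u\<close> with \<open>u = 1 - ln s\<close>. Since \<open>\<Psi> (exp (1 - u))\<close> is convex and
  nondecreasing in \<open>u\<close> for large \<open>u\<close>, there is a convex nondecreasing \<open>\<beta> > 0\<close> on the reals with
  \<open>\<beta> (1 - ln s) \<le> \<Psi> s\<close> on \<open>(0, 1]\<close>, and \<open>\<integral>\<^sub>1\<^sup>\<infinity> 1 / \<beta>\<close> is finite because the substitution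
  \<open>s = exp (1 - t)\<close> turns it into \<open>\<integral>\<^sub>0 1 / (s \<Psi> s)\<close>. A support line
  \<open>\<beta> u \<ge> \<beta> r + k (u - r)\<close> with \<open>k \<ge> 0\<close> gives \<open>\<beta> r s + k psi0 s \<le> s \<Psi> s + k r s\<close> for
  \<open>s \<in> [0, 1]\<close>. Putting \<open>s = N\<^sub>f(t)\<close> and integrating in \<open>t\<close> (layer cake) yields
  \<open>\<beta> r \<parallel>f\<parallel>\<^sub>1 + k \<parallel>f\<parallel>\<^sub>* \<le> \<parallel>f\<parallel>\<^sub>\<psi> + k r \<parallel>f\<parallel>\<^sub>1\<close>, and for \<open>r = \<parallel>f\<parallel>\<^sub>* / \<parallel>f\<parallel>\<^sub>1\<close> the
  \<open>k\<close>-terms cancel. Hence \<open>\<alpha> t = \<beta> t / t\<close> works.\<close>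

lemma distr_fun_nonneg: "0 \<le> distr_fun M f t"
  by (simp add: distr_fun_def)

lemma (in prob_space) distr_fun_le_1: "distr_fun M f t \<le> 1"
  by (simp add: distr_fun_def)

lemma (in finite_measure) distr_fun_antimono:
  "f \<in> borel_measurable M \<Longrightarrow> s \<le> t \<Longrightarrow> distr_fun M f t \<le> distr_fun M f s"
  unfolding distr_fun_def by (intro finite_measure_mono) auto

lemma borel_measurable_antimono:
  fixes g :: "real \<Rightarrow> real"
  assumes "\<And>s t. s \<le> t \<Longrightarrow> g t \<le> g s"
  shows "g \<in> borel_measurable borel"
proof -
  have "(\<lambda>t. - g t) \<in> borel_measurable borel"
    using assms by (intro borel_measurable_mono monoI) simp
  then show ?thesis
    using borel_measurable_uminus[of "\<lambda>t. - g t" borel] by simp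
qed

lemma (in finite_measure) borel_measurable_distr_fun:
  "f \<in> borel_measurable M \<Longrightarrow> distr_fun M f \<in> borel_measurable borel"
  by (intro borel_measurable_antimono distr_fun_antimono)

lemma (in prob_space) borel_measurable_mono_on_comp_distr_fun:
  fixes \<phi> :: "real \<Rightarrow> real"
  assumes "f \<in> borel_measurable M" and "mono_on {0..1} \<phi>"
  shows "(\<lambda>t. \<phi> (distr_fun M f t)) \<in> borel_measurable borel"
  using assms distr_fun_nonneg distr_fun_le_1
  by (intro borel_measurable_antimono mono_onD[OF assms(2)]) (auto intro: distr_fun_antimono)

lemma (in finite_measure) L1_norm_eq_lorentz_norm_id:
  assumes f[measurable]: "f \<in> borel_measurable M"
  shows "L1_norm M f = lorentz_norm M (\<lambda>s. s) f"
proof -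
  interpret pair_sigma_finite M lborel by unfold_locales
  let ?g = "\<lambda>x t. if 0 \<le> t \<and> t < \<bar>f x\<bar> then 1 else 0 :: ennreal"
  have "L1_norm M f = (\<integral>\<^sup>+x. (\<integral>\<^sup>+t. indicator {0..<\<bar>f x\<bar>} t \<partial>lborel) \<partial>M)"
    by (simp add: L1_norm_def)
  also have "\<dots> = (\<integral>\<^sup>+x. (\<integral>\<^sup>+t. ?g x t \<partial>lborel) \<partial>M)"
    by (intro nn_integral_cong) (simp add: indicator_def)
  also have "\<dots> = (\<integral>\<^sup>+t. (\<integral>\<^sup>+x. ?g x t \<partial>M) \<partial>lborel)"
    by (rule Fubini'[symmetric]) measurable
  also have "\<dots> = (\<integral>\<^sup>+t. indicator {0..} t * emeasure M {x\<in>space M. t < \<bar>f x\<bar>} \<partial>lborel)"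
  proof (intro nn_integral_cong)
    fix t
    have "(\<integral>\<^sup>+x. ?g x t \<partial>M) = (\<integral>\<^sup>+x. indicator {0..} t * indicator {x\<in>space M. t < \<bar>f x\<bar>} x \<partial>M)"
      by (intro nn_integral_cong) (auto split: split_indicator)
    then show "(\<integral>\<^sup>+x. ?g x t \<partial>M) = indicator {0..} t * emeasure M {x\<in>space M. t < \<bar>f x\<bar>}"
      by (simp add: nn_integral_cmult)
  qed
  also have "\<dots> = lorentz_norm M (\<lambda>s. s) f"
    by (simp add: lorentz_norm_def distr_fun_def emeasure_eq_measure)
  finally show ?thesis .
qed

lemma (in prob_space) lorentz_norm_mono:
  assumes "\<And>s. 0 \<le> s \<Longrightarrow> s \<le> 1 \<Longrightarrow> \<phi> s \<le> \<theta> s"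
  shows "lorentz_norm M \<phi> f \<le> lorentz_norm M \<theta> f"
  unfolding lorentz_norm_def
  by (intro nn_integral_mono mult_left_mono ennreal_leI assms distr_fun_nonneg distr_fun_le_1)
    simp

lemma (in prob_space) lorentz_norm_add:
  assumes [measurable]: "(\<lambda>t. \<phi> (distr_fun M f t)) \<in> borel_measurable borel"
      "(\<lambda>t. \<theta> (distr_fun M f t)) \<in> borel_measurable borel"
    and nonneg: "\<And>s. 0 \<le> s \<Longrightarrow> s \<le> 1 \<Longrightarrow> 0 \<le> \<phi> s" "\<And>s. 0 \<le> s \<Longrightarrow> s \<le> 1 \<Longrightarrow> 0 \<le> \<theta> s"
  shows "lorentz_norm M (\<lambda>s. \<phi> s + \<theta> s) f = lorentz_norm M \<phi> f + lorentz_norm M \<theta> f"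
proof -
  have "lorentz_norm M (\<lambda>s. \<phi> s + \<theta> s) f =
      (\<integral>\<^sup>+t. indicator {0..} t * ennreal (\<phi> (distr_fun M f t))
            + indicator {0..} t * ennreal (\<theta> (distr_fun M f t)) \<partial>lborel)"
    unfolding lorentz_norm_def
    by (intro nn_integral_cong)
      (simp add: nonneg distr_fun_nonneg distr_fun_le_1 ennreal_plus distrib_left)
  also have "\<dots> = lorentz_norm M \<phi> f + lorentz_norm M \<theta> f"
    unfolding lorentz_norm_def by (rule nn_integral_add) measurable
  finally show ?thesis .
qed

lemma (in prob_space) lorentz_norm_cmult:
  assumes [measurable]: "(\<lambda>t. \<phi> (distr_fun M f t)) \<in> borel_measurable borel"
    and "0 \<le> q"
  shows "lorentz_norm M (\<lambda>s. q * \<phi> s) f = ennreal q * lorentz_norm M \<phi> f"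
proof -
  have "lorentz_norm M (\<lambda>s. q * \<phi> s) f =
      (\<integral>\<^sup>+t. ennreal q * (indicator {0..} t * ennreal (\<phi> (distr_fun M f t))) \<partial>lborel)"
    unfolding lorentz_norm_def using \<open>0 \<le> q\<close>
    by (intro nn_integral_cong) (simp add: ennreal_mult' mult_ac)
  then show ?thesis
    by (simp add: lorentz_norm_def nn_integral_cmult)
qed

lemma convex_on_UNIV_max_shift:
  fixes F :: "real \<Rightarrow> real"
  assumes cv: "convex_on {T..} F" and mo: "mono_on {T..} F"
  shows "convex_on UNIV (\<lambda>u. F (max (u - a) T))"
proof (rule convex_onI)
  fix t x y :: real assume t: "0 < t" "t < 1"
  let ?x = "max (x - a) T" and ?y = "max (y - a) T"
  have lin: "(1 - t) * (x - a) + t * (y - a) \<le> (1 - t) * ?x + t * ?y"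
    and "(1 - t) * T + t * T \<le> (1 - t) * ?x + t * ?y"
    using t by (intro add_mono mult_left_mono; simp)+
  then have const: "T \<le> (1 - t) * ?x + t * ?y"
    by (simp add: algebra_simps)
  have "((1 - t) *\<^sub>R x + t *\<^sub>R y) - a = (1 - t) * (x - a) + t * (y - a)"
    by (simp add: algebra_simps)
  then have "max (((1 - t) *\<^sub>R x + t *\<^sub>R y) - a) T \<le> (1 - t) * ?x + t * ?y"
    using max.boundedI[OF lin const] by simp
  with const
  have "F (max (((1 - t) *\<^sub>R x + t *\<^sub>R y) - a) T) \<le> F ((1 - t) * ?x + t * ?y)"
    by (intro mono_onD[OF mo]) auto
  also have "\<dots> \<le> (1 - t) * F ?x + t * F ?y"
    using convex_onD[OF cv, of t ?x ?y] t by auto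
  finally show "F (max (((1 - t) *\<^sub>R x + t *\<^sub>R y) - a) T) \<le> (1 - t) * F ?x + t * F ?y" .
qed simp

lemma convex_mono_support_line:
  fixes \<beta> :: "real \<Rightarrow> real"
  assumes cv: "convex_on UNIV \<beta>" and mo: "mono \<beta>"
  obtains k where "0 \<le> k" "\<And>u. \<beta> r + k * (u - r) \<le> \<beta> u"
proof -
  let ?S = "(\<lambda>t. (\<beta> r - \<beta> t) / (r - t)) ` ({r<..} \<inter> UNIV)"
  have "0 \<le> Inf ?S"
  proof (rule cInf_greatest)
    fix z assume "z \<in> ?S"
    then obtain t where "r < t" "z = (\<beta> r - \<beta> t) / (r - t)" by auto
    moreover have "\<beta> r \<le> \<beta> t" using mo \<open>r < t\<close> by (simp add: monoD)
    ultimately show "0 \<le> z" by (simp add: divide_nonpos_neg)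
  qed auto
  moreover have "\<beta> r + Inf ?S * (u - r) \<le> \<beta> u" for u
    using convex_le_Inf_differential[OF cv] by auto
  ultimately show ?thesis using that by blast
qed

lemma psi0_eq: "0 < s \<Longrightarrow> psi0 s = s * (1 - ln s)"
  by (simp add: psi0_def ln_div)

lemma psi0_nonneg:
  assumes "0 \<le> s" "s \<le> 1"
  shows "0 \<le> psi0 s"
proof (cases "s = 0")
  case False
  with assms have "0 < s" "ln s \<le> 0" by simp_all
  then show ?thesis
    unfolding psi0_eq[OF \<open>0 < s\<close>] by (intro mult_nonneg_nonneg) linarith+
qed (simp add: psi0_def)

lemma support_line_psi0_le:
  assumes support: "\<And>u. \<beta> r + k * (u - r) \<le> \<beta> u"
    and minorant: "\<And>s. 0 < s \<Longrightarrow> s \<le> 1 \<Longrightarrow> s * \<beta> (1 - ln s) \<le> \<psi> s"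
    and "0 \<le> \<psi> 0" and s: "0 \<le> s" "s \<le> 1"
  shows "\<beta> r * s + k * psi0 s \<le> \<psi> s + k * r * s"
proof (cases "s = 0")
  case True
  then show ?thesis using \<open>0 \<le> \<psi> 0\<close> by (simp add: psi0_def)
next
  case False
  with s have "0 < s" by simp
  have "s * (\<beta> r + k * ((1 - ln s) - r)) \<le> s * \<beta> (1 - ln s)"
    using support \<open>0 < s\<close> by (simp add: mult_left_mono)
  also have "\<dots> \<le> \<psi> s" using minorant \<open>0 < s\<close> s by simp
  finally show ?thesis using \<open>0 < s\<close> by (simp add: psi0_eq algebra_simps)
qed

lemma (in prob_space) lorentz_norm_ge_convex_minorant:
  fixes \<beta> \<psi> :: "real \<Rightarrow> real"
  assumes f[measurable]: "f \<in> borel_measurable M"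
    and cv: "convex_on UNIV \<beta>" and mo: "mono \<beta>" and \<beta>_nonneg: "\<And>u. 0 \<le> \<beta> u"
    and \<psi>_mono: "mono_on {0..1} \<psi>" and "0 \<le> \<psi> 0"
    and minorant: "\<And>s. 0 < s \<Longrightarrow> s \<le> 1 \<Longrightarrow> s * \<beta> (1 - ln s) \<le> \<psi> s"
    and L1_pos: "0 < L1_norm M f" and star_finite: "star_norm M f < \<infinity>"
  defines "L \<equiv> enn2real (L1_norm M f)" and "S \<equiv> enn2real (star_norm M f)"
  shows "ennreal (\<beta> (S / L) * L) \<le> lorentz_norm M \<psi> f"
proof (cases "L1_norm M f = \<infinity>")
  case False
  define r where "r = S / L"
  obtain k where "0 \<le> k" and support: "\<And>u. \<beta> r + k * (u - r) \<le> \<beta> u"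
    using convex_mono_support_line[OF cv mo, of r] by blast
  have L1_eq: "L1_norm M f = ennreal L" and star_eq: "star_norm M f = ennreal S"
    using False star_finite by (simp_all add: L_def S_def less_top)
  have "0 < L" "0 \<le> S"
    using L1_pos by (auto simp: L1_eq S_def)
  then have "0 \<le> r" and krL: "ennreal (k * r) * ennreal L = ennreal (k * S)"
    using \<open>0 \<le> k\<close> by (simp_all add: r_def ennreal_mult[symmetric])
  have [measurable]: "distr_fun M f \<in> borel_measurable borel"
    by (rule borel_measurable_distr_fun[OF f])
  have [measurable]: "(\<lambda>t. \<psi> (distr_fun M f t)) \<in> borel_measurable borel"
    by (rule borel_measurable_mono_on_comp_distr_fun[OF f \<psi>_mono])
  have [measurable]: "(\<lambda>t. psi0 (distr_fun M f t)) \<in> borel_measurable borel"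
    unfolding psi0_def by measurable
  have \<psi>_nonneg: "0 \<le> \<psi> s" if "0 \<le> s" "s \<le> 1" for s
    using \<open>0 \<le> \<psi> 0\<close> mono_onD[OF \<psi>_mono, of 0 s] that by simp
  have "ennreal (\<beta> r * L) + ennreal (k * S) =
      ennreal (\<beta> r) * lorentz_norm M (\<lambda>s. s) f + ennreal k * lorentz_norm M psi0 f"
    using \<open>0 \<le> k\<close> \<open>0 < L\<close> \<open>0 \<le> S\<close> \<beta>_nonneg
    by (simp add: L1_eq star_eq L1_norm_eq_lorentz_norm_id[symmetric] star_norm_def[symmetric]
        ennreal_mult)
  also have "\<dots> = lorentz_norm M (\<lambda>s. \<beta> r * s + k * psi0 s) f"
    using \<open>0 \<le> k\<close> \<beta>_nonneg psi0_nonneg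
    by (simp add: lorentz_norm_add lorentz_norm_cmult)
  also have "\<dots> \<le> lorentz_norm M (\<lambda>s. \<psi> s + k * r * s) f"
    by (intro lorentz_norm_mono support_line_psi0_le[OF support minorant \<open>0 \<le> \<psi> 0\<close>])
  also have "\<dots> = lorentz_norm M \<psi> f + ennreal (k * r) * lorentz_norm M (\<lambda>s. s) f"
    using \<open>0 \<le> k\<close> \<open>0 \<le> r\<close> \<psi>_nonneg
    by (simp add: lorentz_norm_add[where \<phi>=\<psi> and \<theta>="\<lambda>s. k * r * s"] lorentz_norm_cmult)
  also have "\<dots> = lorentz_norm M \<psi> f + ennreal (k * S)"
    by (simp add: L1_norm_eq_lorentz_norm_id[symmetric] L1_eq krL)
  finally have "ennreal (k * S) + ennreal (\<beta> r * L) \<le> ennreal (k * S) + lorentz_norm M \<psi> f"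
    by (simp add: add.commute)
  then show ?thesis
    by (simp add: r_def ennreal_add_left_cancel_le)
next
  case True
  \<comment> \<open>Then \<open>L = 0\<close> and the left-hand side is \<open>ennreal 0\<close>.\<close>
  then show ?thesis
    by (simp add: L_def)
qed

lemma nn_integral_indicator_incseq_SUP:
  assumes "incseq A" "\<And>n. A n \<in> sets M" and f[measurable]: "f \<in> borel_measurable M"
  shows "(SUP n. \<integral>\<^sup>+x. f x * indicator (A n) x \<partial>M) = (\<integral>\<^sup>+x. f x * indicator (\<Union>n. A n) x \<partial>M)"
proof -
  have "(SUP n. emeasure (density M f) (A n)) = emeasure (density M f) (\<Union>n. A n)"
    using assms by (intro SUP_emeasure_incseq) auto
  then show ?thesis
    using assms by (simp add: emeasure_density sets.countable_UN)
qed

lemma UN_atLeastAtMost_diff_real: "(\<Union>n. {b - real n..b}) = {..b}"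
proof (intro equalityI subsetI)
  fix v assume "v \<in> {..b}"
  moreover obtain n :: nat where "b - v \<le> real n"
    using real_arch_simple by blast
  ultimately have "v \<in> {b - real n..b}"
    by simp
  then show "v \<in> (\<Union>n. {b - real n..b})"
    by blast
qed auto

lemma UN_exp_atLeastAtMost_diff_real: "(\<Union>n. {exp (b - real n)..exp b}) = {0<..exp b}"
proof (intro equalityI subsetI)
  fix s assume s: "s \<in> {0<..exp b}"
  obtain n :: nat where "b - ln s \<le> real n"
    using real_arch_simple by blast
  then have "exp (b - real n) \<le> s"
    using s ln_ge_iff[of s "b - real n"] by simp
  then show "s \<in> (\<Union>n. {exp (b - real n)..exp b})"
    using s by auto
qed (auto intro: less_le_trans[OF exp_gt_zero])

lemma nn_integral_exp_substitution:
  fixes h :: "real \<Rightarrow> real"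
  assumes h: "set_borel_measurable borel {0<..exp b} h"
  shows "(\<integral>\<^sup>+v. ennreal (h (exp v) * exp v) * indicator {..b} v \<partial>lborel)
       = (\<integral>\<^sup>+s. ennreal (h s) * indicator {0<..exp b} s \<partial>lborel)"
proof -
  have [measurable]: "(\<lambda>s. indicator {0<..exp b} s * h s) \<in> borel_measurable borel"
    using h by (simp add: set_borel_measurable_def)
  define G where "G v = ennreal (h (exp v) * exp v) * indicator {..b} v" for v
  define H where "H s = ennreal (h s) * indicator {0<..exp b} s" for s
  have "G = (\<lambda>v. ennreal (indicator {0<..exp b} (exp v) * h (exp v) * exp v))"
    by (auto simp: G_def fun_eq_iff split: split_indicator)
  then have [measurable]: "G \<in> borel_measurable borel"
    by simp
  have "H = (\<lambda>s. ennreal (indicator {0<..exp b} s * h s))"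
    by (auto simp: H_def fun_eq_iff split: split_indicator)
  then have [measurable]: "H \<in> borel_measurable borel"
    by simp
  have G_indicator: "(\<lambda>v. G v * indicator {..b} v) = G"
    and H_indicator: "(\<lambda>s. H s * indicator {0<..exp b} s) = H"
    by (auto simp: G_def H_def fun_eq_iff split: split_indicator)
  have piece: "(\<integral>\<^sup>+v. G v * indicator {b - real n..b} v \<partial>lborel)
      = (\<integral>\<^sup>+s. H s * indicator {exp (b - real n)..exp b} s \<partial>lborel)" for n
  proof -
    have "set_borel_measurable borel {exp (b - real n)..exp b} h"
      by (rule set_borel_measurable_subset[OF h]) (auto intro: less_le_trans[OF exp_gt_zero])
    then have "(\<integral>\<^sup>+s. ennreal (h s * indicator {exp (b - real n)..exp b} s) \<partial>lborel)
        = (\<integral>\<^sup>+v. ennreal (h (exp v) * exp v * indicator {b - real n..b} v) \<partial>lborel)"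
      by (rule nn_integral_substitution) (auto intro!: derivative_eq_intros continuous_intros)
    moreover have "(\<integral>\<^sup>+v. G v * indicator {b - real n..b} v \<partial>lborel)
        = (\<integral>\<^sup>+v. ennreal (h (exp v) * exp v * indicator {b - real n..b} v) \<partial>lborel)"
      by (intro nn_integral_cong) (auto simp: G_def split: split_indicator)
    moreover have "(\<integral>\<^sup>+s. H s * indicator {exp (b - real n)..exp b} s \<partial>lborel)
        = (\<integral>\<^sup>+s. ennreal (h s * indicator {exp (b - real n)..exp b} s) \<partial>lborel)"
      by (intro nn_integral_cong)
        (auto simp: H_def split: split_indicator dest: less_le_trans[OF exp_gt_zero])
    ultimately show ?thesis
      by simp
  qed
  have "(\<integral>\<^sup>+v. G v \<partial>lborel) = (SUP n. \<integral>\<^sup>+v. G v * indicator {b - real n..b} v \<partial>lborel)"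
    by (subst nn_integral_indicator_incseq_SUP)
      (auto simp: UN_atLeastAtMost_diff_real G_indicator incseq_def)
  also have "\<dots> = (SUP n. \<integral>\<^sup>+s. H s * indicator {exp (b - real n)..exp b} s \<partial>lborel)"
    by (simp add: piece)
  also have "\<dots> = (\<integral>\<^sup>+s. H s \<partial>lborel)"
    by (subst nn_integral_indicator_incseq_SUP)
      (auto simp: UN_exp_atLeastAtMost_diff_real H_indicator incseq_def)
  finally show ?thesis
    by (simp add: G_def H_def)
qed

lemma nn_integral_exp_diff_substitution:
  fixes h :: "real \<Rightarrow> real"
  assumes h: "set_borel_measurable borel {0<..exp (a - T)} h"
  shows "(\<integral>\<^sup>+t. ennreal (h (exp (a - t)) * exp (a - t)) * indicator {T..} t \<partial>lborel)
       = (\<integral>\<^sup>+s. ennreal (h s) * indicator {0<..exp (a - T)} s \<partial>lborel)"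
proof -
  define G where "G v = ennreal (h (exp v) * exp v) * indicator {..a - T} v" for v
  have [measurable]: "(\<lambda>s. indicator {0<..exp (a - T)} s * h s) \<in> borel_measurable borel"
    using h by (simp add: set_borel_measurable_def)
  have "G = (\<lambda>v. ennreal (indicator {0<..exp (a - T)} (exp v) * h (exp v) * exp v))"
    by (auto simp: G_def fun_eq_iff split: split_indicator)
  then have "G \<in> borel_measurable borel"
    by simp
  from nn_integral_real_affine[OF this, of "-1" a]
  have "(\<integral>\<^sup>+v. G v \<partial>lborel) = (\<integral>\<^sup>+t. G (a - t) \<partial>lborel)"
    by simp
  also have "\<dots> = (\<integral>\<^sup>+t. ennreal (h (exp (a - t)) * exp (a - t)) * indicator {T..} t \<partial>lborel)"
    by (intro nn_integral_cong) (auto simp: G_def split: split_indicator)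
  finally show ?thesis
    using nn_integral_exp_substitution[OF h] by (simp add: G_def)
qed

lemma set_integrable_inverse_comp_exp:
  fixes \<Psi> :: "real \<Rightarrow> real"
  assumes int: "set_integrable lborel {0<..exp (a - T)} (\<lambda>s. 1 / (s * \<Psi> s))"
    and nonneg: "\<And>s. 0 < s \<Longrightarrow> s \<le> exp (a - T) \<Longrightarrow> 0 \<le> \<Psi> s"
  shows "set_integrable lborel {T..} (\<lambda>t. 1 / \<Psi> (exp (a - t)))"
proof -
  let ?S = "{0<..exp (a - T)}" and ?h = "\<lambda>s. 1 / (s * \<Psi> s)"
  have h_meas: "set_borel_measurable borel ?S ?h"
    using int by (simp add: set_integrable_def set_borel_measurable_def)
  then have [measurable]: "(\<lambda>s. indicator ?S s * ?h s) \<in> borel_measurable borel"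
    by (simp add: set_borel_measurable_def)
  define g where "g t = indicator {T..} t * (1 / \<Psi> (exp (a - t)))" for t
  have g_eq: "g t = indicator ?S (exp (a - t)) * ?h (exp (a - t)) * exp (a - t)" for t
    by (auto simp: g_def split: split_indicator)
  have "g \<in> borel_measurable borel"
    unfolding g_eq[abs_def] by measurable
  moreover have "0 \<le> g t" for t
    using nonneg[of "exp (a - t)"] by (auto simp: g_def split: split_indicator)
  moreover have "(\<integral>\<^sup>+t. ennreal (g t) \<partial>lborel)
      = (\<integral>\<^sup>+t. ennreal (?h (exp (a - t)) * exp (a - t)) * indicator {T..} t \<partial>lborel)"
    by (intro nn_integral_cong) (auto simp: g_def split: split_indicator)
  moreover have "\<dots> = (\<integral>\<^sup>+s. ennreal (norm (indicator ?S s *\<^sub>R ?h s)) \<partial>lborel)"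
    unfolding nn_integral_exp_diff_substitution[OF h_meas]
    using nonneg by (intro nn_integral_cong) (auto split: split_indicator)
  moreover have "\<dots> < \<infinity>"
    using int by (simp add: set_integrable_def integrable_iff_bounded)
  ultimately have "integrable lborel g"
    by (intro integrableI_nonneg) auto
  then show ?thesis
    by (simp add: set_integrable_def g_def[abs_def])
qed

locale convex_tail_weight =
  fixes \<Psi> :: "real \<Rightarrow> real" and T :: real
  assumes Psi_1_pos: "0 < \<Psi> 1"
    and Psi_antimono: "antimono_on {0<..1} \<Psi>"
    and T_nonneg: "0 \<le> T"
    and convex_tail: "convex_on {T..} (\<lambda>t. \<Psi> (exp (- t)))"
begin

text \<open>For \<open>u \<ge> 1 + T\<close> this is \<open>c \<Psi> (exp (1 - u))\<close>; below it is frozen at the constant \<open>\<Psi> 1\<close>,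
  which keeps it convex and still below \<open>\<Psi> s\<close> at \<open>u = 1 - ln s\<close>. The factor
  \<open>c = \<Psi> 1 / \<Psi> (exp (- T)) \<le> 1\<close> matches the two pieces.\<close>
definition minorant :: "real \<Rightarrow> real" where
  "minorant u = \<Psi> 1 / \<Psi> (exp (- T)) * \<Psi> (exp (- max (u - 1) T))"

lemma Psi_ge_Psi_1: "0 < s \<Longrightarrow> s \<le> 1 \<Longrightarrow> \<Psi> 1 \<le> \<Psi> s"
  using Psi_antimono by (auto simp: monotone_on_def)

lemma mono_on_Psi_exp_neg: "mono_on {0..} (\<lambda>t. \<Psi> (exp (- t)))"
  using Psi_antimono by (auto intro!: mono_onI simp: monotone_on_def)

lemma Psi_exp_neg_T_pos: "0 < \<Psi> (exp (- T))"
  using Psi_ge_Psi_1[of "exp (- T)"] Psi_1_pos T_nonneg by auto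

lemma minorant_scale: "0 < \<Psi> 1 / \<Psi> (exp (- T))" "\<Psi> 1 / \<Psi> (exp (- T)) \<le> 1"
  using Psi_ge_Psi_1[of "exp (- T)"] Psi_1_pos T_nonneg by auto

lemma mono_minorant: "mono minorant"
  unfolding minorant_def using minorant_scale T_nonneg
  by (intro monoI mult_left_mono mono_onD[OF mono_on_Psi_exp_neg]) auto

lemma minorant_ge_Psi_1: "\<Psi> 1 \<le> minorant u"
proof -
  have "\<Psi> (exp (- T)) \<le> \<Psi> (exp (- max (u - 1) T))"
    using T_nonneg by (intro mono_onD[OF mono_on_Psi_exp_neg]) auto
  then show ?thesis
    using Psi_exp_neg_T_pos Psi_1_pos unfolding minorant_def
    by (simp add: field_simps)
qed

lemma minorant_pos: "0 < minorant u"
  using minorant_ge_Psi_1 Psi_1_pos by (rule order.strict_trans2[rotated])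

lemma convex_minorant: "convex_on UNIV minorant"
proof -
  have "convex_on UNIV (\<lambda>u. \<Psi> (exp (- max (u - 1) T)))"
    using convex_tail mono_on_subset[OF mono_on_Psi_exp_neg] T_nonneg
    by (intro convex_on_UNIV_max_shift) auto
  then show ?thesis
    unfolding minorant_def[abs_def] using minorant_scale by (intro convex_on_cmul) auto
qed

lemma minorant_le_Psi:
  assumes "0 < s" "s \<le> 1"
  shows "minorant (1 - ln s) \<le> \<Psi> s"
proof (cases "T \<le> - ln s")
  case True
  then have "minorant (1 - ln s) = \<Psi> 1 / \<Psi> (exp (- T)) * \<Psi> s"
    using assms by (simp add: minorant_def)
  also have "\<dots> \<le> \<Psi> s"
    using minorant_scale Psi_ge_Psi_1[OF assms] Psi_1_pos
    by (intro mult_left_le_one_le) auto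
  finally show ?thesis .
next
  case False
  then have "minorant (1 - ln s) = \<Psi> 1"
    using Psi_ge_Psi_1[of "exp (- T)"] Psi_1_pos T_nonneg by (simp add: minorant_def)
  then show ?thesis
    using Psi_ge_Psi_1[OF assms] by simp
qed

lemma set_integrable_inverse_minorant:
  assumes "set_integrable lborel {0<..exp (- T)} (\<lambda>s. 1 / (s * \<Psi> s))"
  shows "set_integrable lborel {1..} (\<lambda>t. 1 / minorant t)"
proof -
  have [measurable]: "minorant \<in> borel_measurable borel"
    by (rule borel_measurable_mono[OF mono_minorant])
  have "set_integrable lborel {1..1 + T} (\<lambda>t. 1 / minorant t)"
    unfolding set_integrable_def
  proof (rule integrableI_bounded_set[where A = "{1..1 + T}" and B = "1 / \<Psi> 1"])
    show "AE x in lborel. x \<in> {1..1 + T} \<longrightarrow> norm (indicator {1..1 + T} x *\<^sub>R (1 / minorant x)) \<le> 1 / \<Psi> 1"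
      using minorant_ge_Psi_1 minorant_pos Psi_1_pos
      by (intro AE_I2) (auto simp: abs_of_pos intro!: frac_le)
  qed (use T_nonneg in \<open>auto split: split_indicator\<close>)
  moreover have "set_integrable lborel {1 + T..} (\<lambda>t. 1 / minorant t)"
  proof -
    have "set_integrable lborel {1 + T..} (\<lambda>t. 1 / \<Psi> (exp (1 - t)))"
    proof (intro set_integrable_inverse_comp_exp)
      fix s :: real assume "0 < s" and s_le: "s \<le> exp (1 - (1 + T))"
      have "s \<le> exp (- T)"
        using s_le by simp
      also have "\<dots> \<le> 1"
        using T_nonneg by simp
      finally have "\<Psi> 1 \<le> \<Psi> s"
        using \<open>0 < s\<close> by (rule Psi_ge_Psi_1[rotated])
      then show "0 \<le> \<Psi> s"
        using Psi_1_pos by simp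
    qed (use assms in simp)
    then have "set_integrable lborel {1 + T..}
        (\<lambda>t. \<Psi> (exp (- T)) / \<Psi> 1 * (1 / \<Psi> (exp (1 - t))))"
      by (rule set_integrable_mult_right)
    then show ?thesis
      by (rule set_integrable_cong[THEN iffD1, rotated -1]) (auto simp: minorant_def)
  qed
  ultimately have "set_integrable lborel ({1..1 + T} \<union> {1 + T..}) (\<lambda>t. 1 / minorant t)"
    by (rule set_integrable_Un) auto
  moreover have "{1..1 + T} \<union> {1 + T..} = {1..}"
    using T_nonneg by auto
  ultimately show ?thesis
    by simp
qed

end

lemma mono_on_times_extend_0:
  fixes \<Psi> :: "real \<Rightarrow> real"
  assumes "mono_on {0<..1} (\<lambda>s. s * \<Psi> s)" and "\<forall>s\<in>{0<..1}. 0 \<le> \<Psi> s"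
  shows "mono_on {0..1} (\<lambda>s. s * \<Psi> s)"
proof (intro mono_onI)
  fix a b :: real assume "a \<in> {0..1}" "b \<in> {0..1}" "a \<le> b"
  then show "a * \<Psi> a \<le> b * \<Psi> b"
    using assms mono_onD[OF assms(1), of a b] by (cases "a = 0"; cases "b = 0") auto
qed

lemma divide_ratio_mult_le:
  fixes g S L :: real
  assumes "0 \<le> g" "0 \<le> S" "0 \<le> L"
  shows "g / (S / L) * S \<le> g * L"
  using assms by (cases "S = 0 \<or> L = 0") auto

theorem lemma3p6:
  fixes M :: "'a measure" and \<Psi> :: "real \<Rightarrow> real"
  assumes "prob_space M" and "atomless M"
    and "\<forall>s\<in>{0<..1}. \<Psi> s \<ge> 0"
    and "\<Psi> 1 > 0"
    and "antimono_on {0<..1} \<Psi>"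
    and "mono_on {0<..1} (\<lambda>s. s * \<Psi> s)"
    and "((\<lambda>s. s * \<Psi> s) \<longlongrightarrow> 0) (at_right 0)"
    and "\<exists>\<delta>\<in>{0<..1}. set_integrable lborel {0<..\<delta>} (\<lambda>s. 1 / (s * \<Psi> s))"
    and "\<exists>T\<ge>0. convex_on {T..} (\<lambda>t. \<Psi> (exp (- t)))"
  shows "\<exists>\<alpha> :: real \<Rightarrow> real.
           (\<forall>t\<ge>1. t * \<alpha> t > 0)
         \<and> mono_on {1..} (\<lambda>t. t * \<alpha> t)
         \<and> set_integrable lborel {1..} (\<lambda>t. 1 / (t * \<alpha> t))
         \<and> (\<forall>f \<in> borel_measurable M.
               0 < L1_norm M f \<longrightarrow> star_norm M f < \<infinity> \<longrightarrow>
               ennreal (\<alpha> (enn2real (star_norm M f) / enn2real (L1_norm M f))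
                        * enn2real (star_norm M f))
               \<le> lorentz_norm M (\<lambda>s. s * \<Psi> s) f)"
proof -
  interpret prob_space M by fact
  obtain \<delta> where "0 < \<delta>" and int: "set_integrable lborel {0<..\<delta>} (\<lambda>s. 1 / (s * \<Psi> s))"
    using assms(8) by auto
  obtain T0 where "0 \<le> T0" and convex: "convex_on {T0..} (\<lambda>t. \<Psi> (exp (- t)))"
    using assms(9) by auto
  define T where "T = max T0 (- ln \<delta>)"
  interpret convex_tail_weight \<Psi> T
    using assms(4,5) \<open>0 \<le> T0\<close> by unfold_locales (auto simp: T_def intro: convex_on_subset[OF convex])
  have "exp (- T) \<le> \<delta>"
    using \<open>0 < \<delta>\<close> by (simp add: T_def ln_ge_iff[symmetric])
  then have int_T: "set_integrable lborel {0<..exp (- T)} (\<lambda>s. 1 / (s * \<Psi> s))"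
    by (intro set_integrable_subset[OF int]) auto
  define \<alpha> where "\<alpha> t = minorant t / t" for t
  have t_\<alpha>: "t * \<alpha> t = minorant t" if "1 \<le> t" for t
    using that by (simp add: \<alpha>_def)
  show ?thesis
  proof (intro exI conjI allI impI ballI)
    show "0 < t * \<alpha> t" if "1 \<le> t" for t
      using t_\<alpha>[OF that] minorant_pos by simp
    show "mono_on {1..} (\<lambda>t. t * \<alpha> t)"
      using mono_minorant by (intro mono_onI) (simp add: t_\<alpha> monoD)
    show "set_integrable lborel {1..} (\<lambda>t. 1 / (t * \<alpha> t))"
      using set_integrable_inverse_minorant[OF int_T]
      by (rule set_integrable_cong[THEN iffD1, rotated -1]) (auto simp: t_\<alpha>)
    fix f assume "f \<in> borel_measurable M" "0 < L1_norm M f" "star_norm M f < \<infinity>"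
    then have "ennreal (minorant (enn2real (star_norm M f) / enn2real (L1_norm M f))
        * enn2real (L1_norm M f)) \<le> lorentz_norm M (\<lambda>s. s * \<Psi> s) f"
      using mono_on_times_extend_0[OF assms(6,3)] minorant_le_Psi
      by (intro lorentz_norm_ge_convex_minorant convex_minorant mono_minorant less_imp_le[OF minorant_pos])
        (auto intro: mult_left_mono)
    then show "ennreal (\<alpha> (enn2real (star_norm M f) / enn2real (L1_norm M f)) * enn2real (star_norm M f))
        \<le> lorentz_norm M (\<lambda>s. s * \<Psi> s) f"
      unfolding \<alpha>_def
      by (rule order_trans[rotated]) (intro ennreal_leI divide_ratio_mult_le less_imp_le[OF minorant_pos] enn2real_nonneg)
  qed
qed

end
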